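(* Let $\mathbf{A}\in\mathbb{C}^{M\times N_a}$, $\mathbf{B}\in\mathbb{C}^{M\times N_b}$ have unit-$\ell_2$-norm columns with coherence parameters $\mu_a,\mu_b,\mu_m$, and $\mathbf{D}=[\mathbf{A}\ \mathbf{B}]$. Let $\mathbf{h}=[\mathbf{h}_x^T\ \mathbf{h}_e^T]^T$ where $\mathbf{h}_x\in\mathbb{C}^{N_a}$ has at most $n_x\ge1$ nonzero entries and $\mathbf{h}_e\in\mathbb{C}^{N_b}$ has at most $n_e\ge1$ nonzero entries. Then $$(1-g)\|\mathbf{h}\|_2^2\le\|\mathbf{D}\mathbf{h}\|_2^2\le(1+g)\|\mathbf{h}\|_2^2,\qquad g=\max\{\mu_a(n_x-1),\mu_b(n_e-1)\}+\sqrt{n_xn_e}\,\mu_m.$$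
   Context: Coherence parameters: $\mu_a=\max_{k\ne\ell}|\mathbf{a}_k^H\mathbf{a}_\ell|$, $\mu_b=\max_{k\ne\ell}|\mathbf{b}_k^H\mathbf{b}_\ell|$, $\mu_m=\max_{k,\ell}|\mathbf{a}_k^H\mathbf{b}_\ell|$. *)

theory Defs
  imports "HOL-Analysis.Analysis"
begin

(* Matrices with M rows are represented as functions X :: nat => nat => complex,
   X i k = entry in row i (i < M), column k. Vectors as nat => complex. *)

definition col_inner :: "nat \<Rightarrow> (nat \<Rightarrow> nat \<Rightarrow> complex) \<Rightarrow> nat \<Rightarrow> (nat \<Rightarrow> nat \<Rightarrow> complex) \<Rightarrow> nat \<Rightarrow> complex" where
  "col_inner M X k Y l = (\<Sum>i<M. cnj (X i k) * Y i l)"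

(* coherence of the columns 0..<N of X: max_{k \<noteq> l} |x_k^H x_l|; 0 by convention if N < 2 *)
definition coherence :: "nat \<Rightarrow> nat \<Rightarrow> (nat \<Rightarrow> nat \<Rightarrow> complex) \<Rightarrow> real" where
  "coherence M N X = Max (insert 0 {cmod (col_inner M X k X l) | k l. k < N \<and> l < N \<and> k \<noteq> l})"

(* mutual coherence: max_{k,l} |a_k^H b_l| (0 by convention if a matrix has no columns) *)
definition mutual_coherence :: "nat \<Rightarrow> nat \<Rightarrow> nat \<Rightarrow> (nat \<Rightarrow> nat \<Rightarrow> complex) \<Rightarrow> (nat \<Rightarrow> nat \<Rightarrow> complex) \<Rightarrow> real" where
  "mutual_coherence M Na Nb A B = Max (insert 0 {cmod (col_inner M A k B l) | k l. k < Na \<and> l < Nb})"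

definition nnz :: "nat \<Rightarrow> (nat \<Rightarrow> complex) \<Rightarrow> nat" where
  "nnz N x = card {k. k < N \<and> x k \<noteq> 0}"

definition sqnorm :: "nat \<Rightarrow> (nat \<Rightarrow> complex) \<Rightarrow> real" where
  "sqnorm N x = (\<Sum>k<N. (cmod (x k))\<^sup>2)"

definition Dmul :: "nat \<Rightarrow> nat \<Rightarrow> (nat \<Rightarrow> nat \<Rightarrow> complex) \<Rightarrow> (nat \<Rightarrow> nat \<Rightarrow> complex)
    \<Rightarrow> (nat \<Rightarrow> complex) \<Rightarrow> (nat \<Rightarrow> complex) \<Rightarrow> nat \<Rightarrow> complex" where
  "Dmul Na Nb A B hx he = (\<lambda>i. (\<Sum>k<Na. A i k * hx k) + (\<Sum>l<Nb. B i l * he l))"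

end

theory Submission imports Defs begin

text \<open>Writing \<open>D h = A h\<^sub>x + B h\<^sub>e\<close>, the squared norm \<open>\<parallel>D h\<parallel>\<^sup>2\<close> expands into the Gram forms of
  \<open>A\<close> and \<open>B\<close> and twice the real part of the cross form \<open>\<langle>A h\<^sub>x, B h\<^sub>e\<rangle>\<close>. Unit columns make the
  diagonal of each Gram form equal to \<open>\<parallel>h\<^sub>x\<parallel>\<^sup>2\<close> resp. \<open>\<parallel>h\<^sub>e\<parallel>\<^sup>2\<close>, and every off-diagonal or cross
  entry is bounded by the relevant coherence, so
  \<open>|\<parallel>D h\<parallel>\<^sup>2 - \<parallel>h\<parallel>\<^sup>2| \<le> \<mu>\<^sub>a (\<parallel>h\<^sub>x\<parallel>\<^sub>1\<^sup>2 - \<parallel>h\<^sub>x\<parallel>\<^sup>2) + \<mu>\<^sub>b (\<parallel>h\<^sub>e\<parallel>\<^sub>1\<^sup>2 - \<parallel>h\<^sub>e\<parallel>\<^sup>2) + 2 \<mu>\<^sub>m \<parallel>h\<^sub>x\<parallel>\<^sub>1 \<parallel>h\<^sub>e\<parallel>\<^sub>1\<close>.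
  Cauchy-Schwarz on the supports gives \<open>\<parallel>h\<^sub>x\<parallel>\<^sub>1\<^sup>2 \<le> n\<^sub>x \<parallel>h\<^sub>x\<parallel>\<^sup>2\<close> and \<open>\<parallel>h\<^sub>e\<parallel>\<^sub>1\<^sup>2 \<le> n\<^sub>e \<parallel>h\<^sub>e\<parallel>\<^sup>2\<close>, and
  AM-GM turns the cross term into \<open>\<surd>(n\<^sub>x n\<^sub>e) \<mu>\<^sub>m \<parallel>h\<parallel>\<^sup>2\<close>.\<close>

definition mat_vec :: "(nat \<Rightarrow> nat \<Rightarrow> complex) \<Rightarrow> nat \<Rightarrow> (nat \<Rightarrow> complex) \<Rightarrow> nat \<Rightarrow> complex" where
  "mat_vec X N h = (\<lambda>i. \<Sum>k<N. X i k * h k)"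

definition vec_inner :: "nat \<Rightarrow> (nat \<Rightarrow> complex) \<Rightarrow> (nat \<Rightarrow> complex) \<Rightarrow> complex" where
  "vec_inner M u v = (\<Sum>i<M. cnj (u i) * v i)"

definition l1norm :: "nat \<Rightarrow> (nat \<Rightarrow> complex) \<Rightarrow> real" where
  "l1norm N h = (\<Sum>k<N. cmod (h k))"

lemma l1norm_nonneg: "0 \<le> l1norm N h"
  unfolding l1norm_def by (simp add: sum_nonneg)

lemma sqnorm_nonneg: "0 \<le> sqnorm N h"
  unfolding sqnorm_def by (simp add: sum_nonneg)

lemma cnj_mult_self: "cnj z * z = complex_of_real ((cmod z)\<^sup>2)"
  by (metis complex_norm_square mult.commute of_real_power)

lemma of_real_sqnorm: "complex_of_real (sqnorm M u) = vec_inner M u u"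
  unfolding sqnorm_def vec_inner_def of_real_sum by (simp add: cnj_mult_self)

lemma sqnorm_add:
  "complex_of_real (sqnorm M (\<lambda>i. u i + v i))
     = of_real (sqnorm M u) + of_real (sqnorm M v) + vec_inner M u v + cnj (vec_inner M u v)"
  unfolding of_real_sqnorm vec_inner_def
  by (simp add: sum.distrib algebra_simps mult.commute[of "cnj (v _)"])

lemma vec_inner_mat_vec:
  "vec_inner M (mat_vec X N h) (mat_vec Y N' g)
     = (\<Sum>k<N. \<Sum>l<N'. cnj (h k) * g l * col_inner M X k Y l)"
proof -
  have "vec_inner M (mat_vec X N h) (mat_vec Y N' g)
      = (\<Sum>i<M. \<Sum>k<N. \<Sum>l<N'. cnj (h k) * g l * (cnj (X i k) * Y i l))"
    by (simp add: vec_inner_def mat_vec_def sum_distrib_left sum_distrib_right mult_ac)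
  also have "\<dots> = (\<Sum>k<N. \<Sum>l<N'. \<Sum>i<M. cnj (h k) * g l * (cnj (X i k) * Y i l))"
    by (simp add: sum.swap[of _ "{..<M}"])
  also have "\<dots> = (\<Sum>k<N. \<Sum>l<N'. cnj (h k) * g l * col_inner M X k Y l)"
    by (simp add: col_inner_def sum_distrib_left)
  finally show ?thesis .
qed

lemma finite_bounded_pair_image: "finite {f k l | k l. k < (N::nat) \<and> l < (N'::nat) \<and> P k l}"
proof (rule finite_subset)
  show "{f k l | k l. k < N \<and> l < N' \<and> P k l} \<subseteq> case_prod f ` ({..<N} \<times> {..<N'})"
    by auto
qed auto

lemma coherence_nonneg: "0 \<le> coherence M N X"
  unfolding coherence_def by (rule Max_ge) (simp_all add: finite_bounded_pair_image)

lemma coherence_ge: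
  "\<lbrakk>k < N; l < N; k \<noteq> l\<rbrakk> \<Longrightarrow> cmod (col_inner M X k X l) \<le> coherence M N X"
  unfolding coherence_def by (rule Max_ge) (auto simp: finite_bounded_pair_image)

lemma mutual_coherence_nonneg: "0 \<le> mutual_coherence M Na Nb A B"
  unfolding mutual_coherence_def
  using finite_bounded_pair_image[where P = "\<lambda>_ _. True"] by (intro Max_ge) simp_all

lemma mutual_coherence_ge:
  "\<lbrakk>k < Na; l < Nb\<rbrakk> \<Longrightarrow> cmod (col_inner M A k B l) \<le> mutual_coherence M Na Nb A B"
  unfolding mutual_coherence_def
  using finite_bounded_pair_image[where P = "\<lambda>_ _. True"] by (intro Max_ge) auto

lemma cmod_cnj_mult_mult_le:
  assumes "cmod c \<le> \<mu>"
  shows "cmod (cnj a * b * c) \<le> \<mu> * (cmod a * cmod b)"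
  using mult_left_mono[OF assms, of "cmod a * cmod b"] by (simp add: norm_mult mult_ac)

lemma l1norm_squared_le_sparsity_sqnorm:
  assumes "nnz N h \<le> n"
  shows "(l1norm N h)\<^sup>2 \<le> real n * sqnorm N h"
proof -
  let ?S = "{k. k < N \<and> h k \<noteq> 0}"
  have "l1norm N h = (\<Sum>k\<in>?S. cmod (h k))"
    unfolding l1norm_def by (rule sum.mono_neutral_right) auto
  moreover have "sqnorm N h = (\<Sum>k\<in>?S. (cmod (h k))\<^sup>2)"
    unfolding sqnorm_def by (rule sum.mono_neutral_right) auto
  ultimately have "(l1norm N h)\<^sup>2 \<le> real (nnz N h) * sqnorm N h"
    using sum_squared_le_sum_of_squares[of "\<lambda>k. cmod (h k)" ?S]
    by (simp add: nnz_def mult.commute)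
  also have "\<dots> \<le> real n * sqnorm N h"
    using assms sqnorm_nonneg[of N h] by (intro mult_right_mono) simp_all
  finally show ?thesis .
qed

lemma sqnorm_mat_vec_deviation:
  assumes unit: "\<And>k. k < N \<Longrightarrow> (\<Sum>i<M. (cmod (X i k))\<^sup>2) = 1"
  shows "\<bar>sqnorm M (mat_vec X N h) - sqnorm N h\<bar>
           \<le> coherence M N X * ((l1norm N h)\<^sup>2 - sqnorm N h)"
proof -
  let ?\<mu> = "coherence M N X"
  let ?T = "\<lambda>k l. cnj (h k) * h l * col_inner M X k X l"
  have diag: "?T k k = of_real ((cmod (h k))\<^sup>2)" if "k < N" for k
  proof -
    have "col_inner M X k X k = of_real (\<Sum>i<M. (cmod (X i k))\<^sup>2)"
      unfolding col_inner_def of_real_sum by (simp add: cnj_mult_self)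
    with unit[OF that] show ?thesis by (simp add: cnj_mult_self)
  qed
  have quad: "vec_inner M (mat_vec X N h) (mat_vec X N h)
      = (\<Sum>k<N. ?T k k) + (\<Sum>k<N. \<Sum>l\<in>{..<N}-{k}. ?T k l)"
    unfolding vec_inner_mat_vec by (simp add: sum.remove sum.distrib)
  have "(\<Sum>k<N. ?T k k) = of_real (sqnorm N h)"
    unfolding sqnorm_def of_real_sum by (rule sum.cong) (simp_all add: diag)
  with quad have "complex_of_real (sqnorm M (mat_vec X N h) - sqnorm N h)
      = (\<Sum>k<N. \<Sum>l\<in>{..<N}-{k}. ?T k l)"
    by (simp add: of_real_sqnorm[of M "mat_vec X N h"])
  then have "\<bar>sqnorm M (mat_vec X N h) - sqnorm N h\<bar> = cmod (\<Sum>k<N. \<Sum>l\<in>{..<N}-{k}. ?T k l)"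
    by (metis norm_of_real)
  also have "\<dots> \<le> (\<Sum>k<N. \<Sum>l\<in>{..<N}-{k}. cmod (?T k l))"
    by (rule order_trans[OF norm_sum sum_mono]) (rule norm_sum)
  also have "\<dots> \<le> (\<Sum>k<N. \<Sum>l\<in>{..<N}-{k}. ?\<mu> * (cmod (h k) * cmod (h l)))"
    by (intro sum_mono cmod_cnj_mult_mult_le coherence_ge) auto
  also have "\<dots> = ?\<mu> * (\<Sum>k<N. cmod (h k) * (l1norm N h - cmod (h k)))"
    by (simp add: l1norm_def sum_distrib_left sum_diff1 algebra_simps)
  also have "\<dots> = ?\<mu> * ((l1norm N h)\<^sup>2 - sqnorm N h)"
    by (simp add: l1norm_def sqnorm_def algebra_simps power2_eq_square sum_subtractf
        sum_distrib_right flip: sum_distrib_left)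
  finally show ?thesis .
qed

lemma cmod_vec_inner_mat_vec_le:
  "cmod (vec_inner M (mat_vec A Na hx) (mat_vec B Nb he))
     \<le> mutual_coherence M Na Nb A B * l1norm Na hx * l1norm Nb he"
proof -
  let ?\<mu> = "mutual_coherence M Na Nb A B"
  have "cmod (vec_inner M (mat_vec A Na hx) (mat_vec B Nb he))
     \<le> (\<Sum>k<Na. \<Sum>l<Nb. cmod (cnj (hx k) * he l * col_inner M A k B l))"
    unfolding vec_inner_mat_vec by (rule order_trans[OF norm_sum sum_mono]) (rule norm_sum)
  also have "\<dots> \<le> (\<Sum>k<Na. \<Sum>l<Nb. ?\<mu> * (cmod (hx k) * cmod (he l)))"
    by (intro sum_mono cmod_cnj_mult_mult_le mutual_coherence_ge) auto
  also have "\<dots> = ?\<mu> * l1norm Na hx * l1norm Nb he"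
    by (simp add: l1norm_def sum_distrib_left sum_distrib_right mult_ac)
  finally show ?thesis .
qed

lemma sqnorm_Dmul_deviation:
  assumes "\<And>k. k < Na \<Longrightarrow> (\<Sum>i<M. (cmod (A i k))\<^sup>2) = 1"
    and "\<And>l. l < Nb \<Longrightarrow> (\<Sum>i<M. (cmod (B i l))\<^sup>2) = 1"
  shows "\<bar>sqnorm M (Dmul Na Nb A B hx he) - (sqnorm Na hx + sqnorm Nb he)\<bar>
     \<le> coherence M Na A * ((l1norm Na hx)\<^sup>2 - sqnorm Na hx)
       + coherence M Nb B * ((l1norm Nb he)\<^sup>2 - sqnorm Nb he)
       + 2 * mutual_coherence M Na Nb A B * l1norm Na hx * l1norm Nb he"
proof -
  let ?u = "mat_vec A Na hx" and ?v = "mat_vec B Nb he"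
  let ?C = "vec_inner M ?u ?v"
  have devA: "\<bar>sqnorm M ?u - sqnorm Na hx\<bar> \<le> coherence M Na A * ((l1norm Na hx)\<^sup>2 - sqnorm Na hx)"
    using assms(1) by (rule sqnorm_mat_vec_deviation)
  have devB: "\<bar>sqnorm M ?v - sqnorm Nb he\<bar> \<le> coherence M Nb B * ((l1norm Nb he)\<^sup>2 - sqnorm Nb he)"
    using assms(2) by (rule sqnorm_mat_vec_deviation)
  have "Dmul Na Nb A B hx he = (\<lambda>i. ?u i + ?v i)"
    by (simp add: Dmul_def mat_vec_def)
  then have "complex_of_real (sqnorm M (Dmul Na Nb A B hx he) - (sqnorm Na hx + sqnorm Nb he))
      = of_real (sqnorm M ?u - sqnorm Na hx) + of_real (sqnorm M ?v - sqnorm Nb he) + ?C + cnj ?C"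
    by (simp add: sqnorm_add)
  then have "\<bar>sqnorm M (Dmul Na Nb A B hx he) - (sqnorm Na hx + sqnorm Nb he)\<bar>
      = cmod (of_real (sqnorm M ?u - sqnorm Na hx) + of_real (sqnorm M ?v - sqnorm Nb he) + ?C + cnj ?C)"
    by (metis norm_of_real)
  also have "\<dots> \<le> cmod (complex_of_real (sqnorm M ?u - sqnorm Na hx))
      + cmod (complex_of_real (sqnorm M ?v - sqnorm Nb he)) + cmod ?C + cmod (cnj ?C)"
    by (intro order_trans[OF norm_triangle_ineq] add_mono order_refl)
  also have "\<dots> = \<bar>sqnorm M ?u - sqnorm Na hx\<bar> + \<bar>sqnorm M ?v - sqnorm Nb he\<bar> + 2 * cmod ?C"
    by (simp only: norm_of_real complex_mod_cnj mult_2 add.assoc)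
  finally show ?thesis
    using devA devB cmod_vec_inner_mat_vec_le[of M A Na hx B Nb he]
    by linarith
qed

lemma sparse_deviation_bound:
  fixes \<mu>a \<mu>b \<mu>m nx ne X Y Lx Ly :: real
  assumes "0 \<le> \<mu>a" "0 \<le> \<mu>b" "0 \<le> \<mu>m" "0 \<le> nx" "0 \<le> ne"
    and "0 \<le> X" "0 \<le> Y" "0 \<le> Lx" "0 \<le> Ly"
    and Lx: "Lx\<^sup>2 \<le> nx * X" and Ly: "Ly\<^sup>2 \<le> ne * Y"
  shows "\<mu>a * (Lx\<^sup>2 - X) + \<mu>b * (Ly\<^sup>2 - Y) + 2 * \<mu>m * Lx * Ly
     \<le> (max (\<mu>a * (nx - 1)) (\<mu>b * (ne - 1)) + sqrt (nx * ne) * \<mu>m) * (X + Y)"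
proof -
  have diag: "\<mu>a * (Lx\<^sup>2 - X) + \<mu>b * (Ly\<^sup>2 - Y) \<le> max (\<mu>a * (nx - 1)) (\<mu>b * (ne - 1)) * (X + Y)"
  proof -
    have "\<mu>a * (Lx\<^sup>2 - X) \<le> \<mu>a * (nx - 1) * X"
      using mult_left_mono[OF Lx \<open>0 \<le> \<mu>a\<close>] by (simp add: algebra_simps)
    moreover have "\<mu>a * (nx - 1) * X \<le> max (\<mu>a * (nx - 1)) (\<mu>b * (ne - 1)) * X"
      using \<open>0 \<le> X\<close> by (intro mult_right_mono) simp_all
    moreover have "\<mu>b * (Ly\<^sup>2 - Y) \<le> \<mu>b * (ne - 1) * Y"
      using mult_left_mono[OF Ly \<open>0 \<le> \<mu>b\<close>] by (simp add: algebra_simps)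
    moreover have "\<mu>b * (ne - 1) * Y \<le> max (\<mu>a * (nx - 1)) (\<mu>b * (ne - 1)) * Y"
      using \<open>0 \<le> Y\<close> by (intro mult_right_mono) simp_all
    ultimately show ?thesis by (simp add: distrib_left)
  qed
  have "(Lx * Ly)\<^sup>2 \<le> (nx * ne) * (X * Y)"
    using mult_mono[OF Lx Ly order_trans[OF zero_le_power2 Lx] zero_le_power2]
    by (simp add: power_mult_distrib mult_ac)
  then have "Lx * Ly \<le> sqrt ((nx * ne) * (X * Y))"
    by (rule real_le_rsqrt)
  also have "\<dots> = sqrt (nx * ne) * sqrt (X * Y)"
    by (rule real_sqrt_mult)
  also have "\<dots> \<le> sqrt (nx * ne) * ((X + Y) / 2)"
    using arith_geo_mean_sqrt[OF \<open>0 \<le> X\<close> \<open>0 \<le> Y\<close>] \<open>0 \<le> nx\<close> \<open>0 \<le> ne\<close>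
    by (intro mult_left_mono) simp_all
  finally have "2 * \<mu>m * (Lx * Ly) \<le> 2 * \<mu>m * (sqrt (nx * ne) * ((X + Y) / 2))"
    using \<open>0 \<le> \<mu>m\<close> by (intro mult_left_mono) simp_all
  then have "2 * \<mu>m * Lx * Ly \<le> sqrt (nx * ne) * \<mu>m * (X + Y)"
    by (simp add: field_simps)
  with diag show ?thesis by (simp add: distrib_right)
qed

theorem mainTheorem7:
  fixes M Na Nb nx ne :: nat
    and A B :: "nat \<Rightarrow> nat \<Rightarrow> complex"
    and hx he :: "nat \<Rightarrow> complex"
  assumes unitA: "\<And>k. k < Na \<Longrightarrow> (\<Sum>i<M. (cmod (A i k))\<^sup>2) = 1"
    and unitB: "\<And>l. l < Nb \<Longrightarrow> (\<Sum>i<M. (cmod (B i l))\<^sup>2) = 1"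
    and nx: "nx \<ge> 1" and ne: "ne \<ge> 1"
    and sx: "nnz Na hx \<le> nx" and se: "nnz Nb he \<le> ne"
  defines "g \<equiv> max (coherence M Na A * (real nx - 1)) (coherence M Nb B * (real ne - 1))
                 + sqrt (real nx * real ne) * mutual_coherence M Na Nb A B"
  shows "(1 - g) * (sqnorm Na hx + sqnorm Nb he) \<le> sqnorm M (Dmul Na Nb A B hx he)
       \<and> sqnorm M (Dmul Na Nb A B hx he) \<le> (1 + g) * (sqnorm Na hx + sqnorm Nb he)"
proof -
  have "\<bar>sqnorm M (Dmul Na Nb A B hx he) - (sqnorm Na hx + sqnorm Nb he)\<bar>
      \<le> g * (sqnorm Na hx + sqnorm Nb he)"
    unfolding g_def
    using sqnorm_Dmul_deviation[OF unitA unitB]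
      sparse_deviation_bound[OF coherence_nonneg coherence_nonneg mutual_coherence_nonneg
        of_nat_0_le_iff of_nat_0_le_iff sqnorm_nonneg sqnorm_nonneg l1norm_nonneg l1norm_nonneg
        l1norm_squared_le_sparsity_sqnorm[OF sx] l1norm_squared_le_sparsity_sqnorm[OF se]]
    by (rule order_trans)
  then show ?thesis by (simp add: algebra_simps abs_le_iff)
qed

end
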